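(* For each of the sets $\{000,100,110\}$ and $\{000,001,010,011\}$, and for every set obtained from either of them by any sequence of coordinate negations and coordinate permutations, $\rho(\mathcal S)=2$.
   Context: Binary triples $(x_1,x_2,x_3)\in\{0,1\}^3$ are written $x_1x_2x_3$. Let $\mathcal S\subseteq\{0,1\}^3$ be nonempty. A distribution scheme with domain $\mathcal S$ is a pair $(P_R,\psi)$ where $P_R$ is a probability distribution on a finite set $\mathcal R$ and $\psi:\mathcal S\times\mathcal R\to\mathcal W_{12}\times\mathcal W_{23}\times\mathcal W_{31}$ for finite share alphabets. Given $\mathbf x=(x_1,x_2,x_3)\in\mathcal S$, the shares are $(W_{12},W_{23},W_{31})=\psi(\mathbf x,R)$, $R\sim P_R$. Party $P_1$ sees $V_1=(W_{12},W_{31})$, $P_2$ sees $V_2=(W_{23},W_{12})$, $P_3$ sees $V_3=(W_{31},W_{23})$. It is a 3SS scheme if (Correctness) for each $i$ there is a function $\phi_i$ with $\Pr[\phi_i(V_i)=x_i]=1$ for every $\mathbf x\in\mathcal S$, and (Perfect privacy) for each $i$ and all $\mathbf x,\mathbf x'\in\mathcal S$ with $x_i=x'_i$, $V_i$ has the same distribution under secret $\mathbf x$ as under $\mathbf x'$. The randomness complexity $\rho(\mathcal S)$ is the minimum of $\log_2|\mathcal R|$ over all 3SS schemes with domain $\mathcal S$. A coordinate negation maps $\mathcal S$ to $\{\mathbf x\oplus e_i:\mathbf x\in\mathcal S\}$; a coordinate permutation permutes the three coordinates of every element. *)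

theory Defs
  imports "HOL-Library.Numeral_Type" "HOL-Probability.Probability_Mass_Function"
begin

text \<open>A binary triple x1 x2 x3 is a function from the three-element type 3 to bool;
  coordinate x1 is index 0, x2 is index 1, x3 is index 2.\<close>
type_synonym triple = "3 \<Rightarrow> bool"

definition trip :: "bool \<Rightarrow> bool \<Rightarrow> bool \<Rightarrow> triple" where
  "trip a b c = (\<lambda>i. if i = 0 then a else if i = 1 then b else c)"

text \<open>Shares (W12, W23, W31); share alphabets are encoded into nat (finite alphabets
  are automatic since the domain and the randomness set are finite).\<close>
type_synonym shares = "nat \<times> nat \<times> nat"

definition view :: "3 \<Rightarrow> shares \<Rightarrow> nat \<times> nat" where
  "view i w = (case w of (w12, w23, w31) \<Rightarrow>
      if i = 0 then (w12, w31) else if i = 1 then (w23, w12) else (w31, w23))"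

definition is_3SS :: "triple set \<Rightarrow> nat set \<Rightarrow> nat pmf \<Rightarrow> (triple \<Rightarrow> nat \<Rightarrow> shares) \<Rightarrow> bool" where
  "is_3SS S R P psi \<longleftrightarrow> finite R \<and> set_pmf P \<subseteq> R \<and>
     (\<forall>i. \<exists>phi. \<forall>x\<in>S. \<forall>r\<in>set_pmf P. phi (view i (psi x r)) = x i) \<and>
     (\<forall>i. \<forall>x\<in>S. \<forall>x'\<in>S. x i = x' i \<longrightarrow>
         map_pmf (\<lambda>r. view i (psi x r)) P = map_pmf (\<lambda>r. view i (psi x' r)) P)"

definition rho :: "triple set \<Rightarrow> real" where
  "rho S = Inf {log 2 (real (card R)) | R P psi. is_3SS S R P psi}"

definition negate_coord :: "3 \<Rightarrow> triple set \<Rightarrow> triple set" where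
  "negate_coord i S = (\<lambda>x. x(i := \<not> x i)) ` S"

definition permute_coords :: "(3 \<Rightarrow> 3) \<Rightarrow> triple set \<Rightarrow> triple set" where
  "permute_coords \<sigma> S = (\<lambda>x. x \<circ> \<sigma>) ` S"

inductive_set sym_orbit :: "triple set \<Rightarrow> triple set set" for S0 where
  base: "S0 \<in> sym_orbit S0"
| neg: "T \<in> sym_orbit S0 \<Longrightarrow> negate_coord i T \<in> sym_orbit S0"
| perm: "T \<in> sym_orbit S0 \<Longrightarrow> bij \<sigma> \<Longrightarrow> permute_coords \<sigma> T \<in> sym_orbit S0"

end

theory Submission
  imports Defs
begin

(*
  Both sets, and hence every set in their orbits, contain a corner of the cube:
  secrets a, b, c such that a, b differ exactly in coordinate i and b, c exactly in coordinate
  j \<noteq> i. Privacy makes the supports of a party's view equal for two secrets that agree in that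
  party's coordinate, and correctness makes them disjoint otherwise. Let h be the share hidden
  from party i. Among the share triples that b can produce, comparing with a through parties j
  and k shows that no value of h is carried by a single triple, and comparing with c shows that
  h is not constant; so b alone needs four values of the randomness.

  Both sets lie in a facet x_k = e, where a one-time pad with two random bits u, v
  suffices: party k sees (u, v), party i sees u and (x_i + u, x_j + v), party j sees v and the
  same pair, all sums mod 2.
*)

lemma UNIV_eq_distinct_3:
  fixes i j k :: 3
  assumes "i \<noteq> j" "i \<noteq> k" "j \<noteq> k"
  shows "UNIV = {i, j, k}"
  using card_subset_eq[of UNIV "{i, j, k}"] assms by simp

lemma UNIV_3_eq: "(UNIV :: 3 set) = {0, 1, 2}"
  by (rule UNIV_eq_distinct_3) simp_all

lemma obtain_third_3:
  fixes i j :: 3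
  assumes "i \<noteq> j"
  obtains k where "k \<noteq> i" "k \<noteq> j"
proof -
  have "card {i, j} < CARD(3)"
    by (simp add: card_insert_if)
  then have "\<not> UNIV \<subseteq> {i, j}"
    using card_mono[of "{i, j}" UNIV] by auto
  then show ?thesis using that by blast
qed

lemma obtain_other_two_3:
  fixes i :: 3
  obtains j k where "i \<noteq> j" "i \<noteq> k" "j \<noteq> k"
proof -
  obtain j :: 3 where "i \<noteq> j"
    by (metis zero_neq_one)
  moreover obtain k where "k \<noteq> i" "k \<noteq> j"
    using obtain_third_3 calculation by blast
  ultimately show ?thesis using that by metis
qed

lemma all_3_iff: "(\<forall>t::3. P t) \<longleftrightarrow> P 0 \<and> P 1 \<and> P 2"
  by (metis UNIV_3_eq UNIV_I insertE singletonD)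

definition hidden_share :: "3 \<Rightarrow> shares \<Rightarrow> nat" where
  "hidden_share t w = (case w of (w12, w23, w31) \<Rightarrow> if t = 0 then w23 else if t = 1 then w31 else w12)"

lemma view_eq_iff_hidden_shares:
  fixes i j k :: 3
  assumes "i \<noteq> j" "i \<noteq> k" "j \<noteq> k"
  shows "view i w = view i w' \<longleftrightarrow>
    hidden_share j w = hidden_share j w' \<and> hidden_share k w = hidden_share k w'"
proof -
  have "i \<in> {0, 1, 2}" "j \<in> {0, 1, 2}" "k \<in> {0, 1, 2}"
    using UNIV_3_eq by auto
  then show ?thesis
    using assms by (cases w; cases w') (auto simp: view_def hidden_share_def)
qed

definition shares_of :: "(3 \<Rightarrow> nat) \<Rightarrow> shares" where
  "shares_of s = (s 2, s 0, s 1)"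

lemma hidden_share_shares_of [simp]: "hidden_share t (shares_of s) = s t"
  using UNIV_3_eq by (auto simp: hidden_share_def shares_of_def)

lemma hidden_share_fibre_not_singleton:
  fixes A B :: "shares set"
  assumes same: "\<And>t. t \<noteq> i \<Longrightarrow> view t ` A = view t ` B"
    and apart: "view i ` A \<inter> view i ` B = {}"
    and w: "w \<in> B"
  shows "\<exists>w'\<in>B. w' \<noteq> w \<and> hidden_share i w' = hidden_share i w"
proof (rule ccontr)
  assume "\<not> ?thesis"
  then have unique: "\<And>w'. w' \<in> B \<Longrightarrow> hidden_share i w' = hidden_share i w \<Longrightarrow> w' = w"
    by blast
  obtain j k where ijk: "i \<noteq> j" "i \<noteq> k" "j \<noteq> k"
    using obtain_other_two_3 by blast
  have "view k w \<in> view k ` A"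
    using same[of k] ijk w by auto
  then obtain a where a: "a \<in> A" "view k a = view k w"
    by auto
  have "view j a \<in> view j ` B"
    using same[of j] ijk a by auto
  then obtain w' where w': "w' \<in> B" "view j w' = view j a"
    by auto
  have "w' = w"
    using unique w' a view_eq_iff_hidden_shares[of j i k] view_eq_iff_hidden_shares[of k i j] ijk
    by auto
  then have "view i a = view i w"
    using w' a view_eq_iff_hidden_shares[of i j k] view_eq_iff_hidden_shares[of j i k]
      view_eq_iff_hidden_shares[of k i j] ijk
    by auto
  then show False
    using apart a w by blast
qed

lemma hidden_share_not_constant:
  fixes B C :: "shares set"
  assumes same: "\<And>t. t \<noteq> j \<Longrightarrow> view t ` B = view t ` C"
    and apart: "view j ` B \<inter> view j ` C = {}"
    and ij: "i \<noteq> j" and w: "w \<in> B"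
  shows "\<exists>w'\<in>B. hidden_share i w' \<noteq> hidden_share i w"
proof (rule ccontr)
  assume "\<not> ?thesis"
  then have const: "\<And>w'. w' \<in> B \<Longrightarrow> hidden_share i w' = hidden_share i w"
    by blast
  obtain k where k: "k \<noteq> i" "k \<noteq> j"
    using obtain_third_3 ij by blast
  have "view i w \<in> view i ` C"
    using same[of i] ij w by auto
  then obtain c where c: "c \<in> C" "view i c = view i w"
    by auto
  have "view k c \<in> view k ` B"
    using same[of k] k c by auto
  then obtain w' where w': "w' \<in> B" "view k w' = view k c"
    by auto
  have "view j c = view j w"
    using const[OF w'(1)] w' c view_eq_iff_hidden_shares[of j i k]
      view_eq_iff_hidden_shares[of i j k] view_eq_iff_hidden_shares[of k i j] ij k
    by auto
  then show False
    using apart c w by blast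
qed

lemma card_ge_4_if_corner_views:
  fixes A B C :: "shares set"
  assumes AB: "\<And>t. t \<noteq> i \<Longrightarrow> view t ` A = view t ` B" "view i ` A \<inter> view i ` B = {}"
    and BC: "\<And>t. t \<noteq> j \<Longrightarrow> view t ` B = view t ` C" "view j ` B \<inter> view j ` C = {}"
    and "i \<noteq> j" "finite B" "B \<noteq> {}"
  shows "4 \<le> card B"
proof -
  obtain w0 where w0: "w0 \<in> B"
    using \<open>B \<noteq> {}\<close> by blast
  obtain w1 where w1: "w1 \<in> B" "hidden_share i w1 \<noteq> hidden_share i w0"
    using hidden_share_not_constant[OF BC \<open>i \<noteq> j\<close> w0] by blast
  obtain w0' where w0': "w0' \<in> B" "w0' \<noteq> w0" "hidden_share i w0' = hidden_share i w0"
    using hidden_share_fibre_not_singleton[OF AB w0] by blast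
  obtain w1' where w1': "w1' \<in> B" "w1' \<noteq> w1" "hidden_share i w1' = hidden_share i w1"
    using hidden_share_fibre_not_singleton[OF AB w1(1)] by blast
  have "w0 \<noteq> w1" "w0 \<noteq> w1'" "w0' \<noteq> w1" "w0' \<noteq> w1'"
    using w1(2) w0'(3) w1'(3) by metis+
  then have "card {w0, w0', w1, w1'} = 4"
    using w0'(2) w1'(2) by auto
  moreover have "card {w0, w0', w1, w1'} \<le> card B"
    using w0 w1 w0' w1' \<open>finite B\<close> by (intro card_mono) auto
  ultimately show ?thesis
    by simp
qed

definition cube_edge :: "3 \<Rightarrow> triple \<Rightarrow> triple \<Rightarrow> bool" where
  "cube_edge i x y \<longleftrightarrow> x i \<noteq> y i \<and> (\<forall>t. t \<noteq> i \<longrightarrow> x t = y t)"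

definition has_corner :: "triple set \<Rightarrow> bool" where
  "has_corner S \<longleftrightarrow> (\<exists>a\<in>S. \<exists>b\<in>S. \<exists>c\<in>S. \<exists>i j. i \<noteq> j \<and> cube_edge i a b \<and> cube_edge j b c)"

lemma has_cornerI:
  "a \<in> S \<Longrightarrow> b \<in> S \<Longrightarrow> c \<in> S \<Longrightarrow> i \<noteq> j \<Longrightarrow> cube_edge i a b \<Longrightarrow> cube_edge j b c \<Longrightarrow> has_corner S"
  unfolding has_corner_def by blast

lemma has_cornerE:
  assumes "has_corner S"
  obtains a b c i j where "a \<in> S" "b \<in> S" "c \<in> S" "i \<noteq> j" "cube_edge i a b" "cube_edge j b c"
  using assms unfolding has_corner_def by blast

lemma is_3SS_privacy:
  assumes "is_3SS S R P psi" "x \<in> S" "x' \<in> S" "x t = x' t"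
  shows "map_pmf (\<lambda>r. view t (psi x r)) P = map_pmf (\<lambda>r. view t (psi x' r)) P"
proof -
  have "\<forall>t. \<forall>x\<in>S. \<forall>x'\<in>S. x t = x' t \<longrightarrow>
      map_pmf (\<lambda>r. view t (psi x r)) P = map_pmf (\<lambda>r. view t (psi x' r)) P"
    using assms(1) unfolding is_3SS_def by (elim conjE)
  from this[rule_format, OF assms(2-4)] show ?thesis .
qed

lemma is_3SS_correctness:
  assumes "is_3SS S R P psi"
  obtains phi where "\<forall>x\<in>S. \<forall>r\<in>set_pmf P. phi (view t (psi x r)) = x t"
proof -
  have "\<forall>t. \<exists>phi. \<forall>x\<in>S. \<forall>r\<in>set_pmf P. phi (view t (psi x r)) = x t"
    using assms unfolding is_3SS_def by (elim conjE)
  then show ?thesis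
    using that by blast
qed
lemma is_3SS_view_image_eq:
  assumes "is_3SS S R P psi" "x \<in> S" "x' \<in> S" "x t = x' t"
  shows "view t ` psi x ` set_pmf P = view t ` psi x' ` set_pmf P"
proof -
  have "set_pmf (map_pmf (\<lambda>r. view t (psi x r)) P) = set_pmf (map_pmf (\<lambda>r. view t (psi x' r)) P)"
    using is_3SS_privacy[OF assms] by (rule arg_cong)
  then show ?thesis
    by (simp add: image_image)
qed

lemma is_3SS_view_image_disjoint:
  assumes "is_3SS S R P psi" "x \<in> S" "x' \<in> S" "x t \<noteq> x' t"
  shows "view t ` psi x ` set_pmf P \<inter> view t ` psi x' ` set_pmf P = {}"
proof -
  obtain phi where phi: "\<forall>x\<in>S. \<forall>r\<in>set_pmf P. phi (view t (psi x r)) = x t"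
    using assms(1) by (rule is_3SS_correctness)
  have "view t (psi x r) \<noteq> view t (psi x' r')" if "r \<in> set_pmf P" "r' \<in> set_pmf P" for r r'
    using phi that assms(2-4) by metis
  then show ?thesis
    by blast
qed

lemma is_3SS_card_ge_4:
  assumes scheme: "is_3SS S R P psi" and "has_corner S"
  shows "4 \<le> card R"
proof -
  obtain a b c i j where abc: "a \<in> S" "b \<in> S" "c \<in> S" "i \<noteq> j" "cube_edge i a b" "cube_edge j b c"
    using \<open>has_corner S\<close> by (rule has_cornerE)
  have R: "finite R" "set_pmf P \<subseteq> R"
    using scheme unfolding is_3SS_def by simp_all
  have "4 \<le> card (psi b ` set_pmf P)"
  proof (rule card_ge_4_if_corner_views)
    show "view t ` psi a ` set_pmf P = view t ` psi b ` set_pmf P" if "t \<noteq> i" for t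
      using is_3SS_view_image_eq[OF scheme] abc that unfolding cube_edge_def by blast
    show "view t ` psi b ` set_pmf P = view t ` psi c ` set_pmf P" if "t \<noteq> j" for t
      using is_3SS_view_image_eq[OF scheme] abc that unfolding cube_edge_def by blast
    show "view i ` psi a ` set_pmf P \<inter> view i ` psi b ` set_pmf P = {}"
      using is_3SS_view_image_disjoint[OF scheme] abc unfolding cube_edge_def by blast
    show "view j ` psi b ` set_pmf P \<inter> view j ` psi c ` set_pmf P = {}"
      using is_3SS_view_image_disjoint[OF scheme] abc unfolding cube_edge_def by blast
    show "finite (psi b ` set_pmf P)"
      using R finite_subset by blast
  qed (use abc(4) set_pmf_not_empty in auto)
  also have "\<dots> \<le> card (set_pmf P)"
    using R finite_subset by (blast intro: card_image_le)
  also have "\<dots> \<le> card R"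
    using R by (rule card_mono)
  finally show ?thesis .
qed

definition bits_code :: "bool \<Rightarrow> bool \<Rightarrow> nat" where
  "bits_code p q = of_bool p + 2 * of_bool q"

lemma bits_code_eq_iff [simp]: "bits_code p q = bits_code p' q' \<longleftrightarrow> p = p' \<and> q = q'"
  by (cases p; cases p'; cases q; cases q') (simp_all add: bits_code_def)

lemma odd_bits_code [simp]: "odd (bits_code p q) \<longleftrightarrow> p"
  by (cases p; cases q) (simp_all add: bits_code_def)

lemma odd_bits_code_div_2 [simp]: "odd (bits_code p q div 2) \<longleftrightarrow> q"
  by (cases p; cases q) (simp_all add: bits_code_def)

lemma bits_code_less_4: "bits_code p q < 4"
  by (cases p; cases q) (simp_all add: bits_code_def)

lemma bits_code_odd_odd_div_2:
  assumes "r < 4"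
  shows "bits_code (odd r) (odd (r div 2)) = r"
proof -
  have "r = 0 \<or> r = 1 \<or> r = 2 \<or> r = 3"
    using assms by arith
  then show ?thesis
    by (elim disjE) (simp_all add: bits_code_def)
qed

lemma bij_betw_flip_bits:
  "bij_betw (\<lambda>r::nat. bits_code (odd r \<noteq> p) (odd (r div 2) \<noteq> q)) {..<4} {..<4}"
  by (rule bij_betw_byWitness[where f' = "\<lambda>r. bits_code (odd r \<noteq> p) (odd (r div 2) \<noteq> q)"])
    (cases p; cases q; simp add: image_subset_iff bits_code_less_4 bits_code_odd_odd_div_2)+

lemma map_pmf_of_set_eq_by_bij:
  assumes "bij_betw \<pi> A A" "finite A" "A \<noteq> {}" "\<And>r. r \<in> A \<Longrightarrow> f r = g (\<pi> r)"
  shows "map_pmf f (pmf_of_set A) = map_pmf g (pmf_of_set A)"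
proof -
  have "map_pmf g (pmf_of_set A) = map_pmf g (map_pmf \<pi> (pmf_of_set A))"
    using map_pmf_of_set_bij_betw[OF assms(1,3,2)] by simp
  also have "\<dots> = map_pmf (\<lambda>r. g (\<pi> r)) (pmf_of_set A)"
    by (simp add: map_pmf_comp)
  also have "\<dots> = map_pmf f (pmf_of_set A)"
    by (rule map_pmf_cong) (use assms(2-4) in auto)
  finally show ?thesis ..
qed

lemma exists_decoder:
  assumes "\<And>x x' r r'. x \<in> S \<Longrightarrow> x' \<in> S \<Longrightarrow> r \<in> A \<Longrightarrow> r' \<in> A \<Longrightarrow> f x r = f x' r' \<Longrightarrow> g x = g x'"
  shows "\<exists>phi. \<forall>x\<in>S. \<forall>r\<in>A. phi (f x r) = g x"
proof (intro exI[of _ "\<lambda>v. g (SOME x0. x0 \<in> S \<and> (\<exists>r0\<in>A. f x0 r0 = v))"] ballI)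
  fix x r
  assume x: "x \<in> S" and r: "r \<in> A"
  let ?x0 = "SOME x0. x0 \<in> S \<and> (\<exists>r0\<in>A. f x0 r0 = f x r)"
  have "?x0 \<in> S \<and> (\<exists>r0\<in>A. f ?x0 r0 = f x r)"
    by (rule someI_ex) (use x r in blast)
  then show "g ?x0 = g x"
    using assms x r by blast
qed

definition facet_scheme :: "3 \<Rightarrow> 3 \<Rightarrow> triple \<Rightarrow> nat \<Rightarrow> shares" where
  "facet_scheme i j x r = shares_of (\<lambda>t.
     if t = i then of_bool (odd (r div 2))
     else if t = j then of_bool (odd r)
     else bits_code (x i \<noteq> odd r) (x j \<noteq> odd (r div 2)))"

lemma facet_scheme_decodes:
  assumes ijk: "i \<noteq> j" "i \<noteq> k" "j \<noteq> k" and "x k = x' k"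
    and views: "view t (facet_scheme i j x r) = view t (facet_scheme i j x' r')"
  shows "x t = x' t"
proof -
  have "t \<in> {i, j, k}"
    using UNIV_eq_distinct_3[OF ijk] by blast
  moreover have "x i = x' i" if "t = i"
    using views that view_eq_iff_hidden_shares[OF ijk] ijk by (auto simp: facet_scheme_def)
  moreover have "x j = x' j" if "t = j"
    using views that view_eq_iff_hidden_shares[of j i k] ijk by (auto simp: facet_scheme_def)
  ultimately show ?thesis
    using \<open>x k = x' k\<close> by blast
qed

lemma facet_scheme_private:
  assumes ijk: "i \<noteq> j" "i \<noteq> k" "j \<noteq> k" and "x t = x' t"
  shows "map_pmf (\<lambda>r. view t (facet_scheme i j x r)) (pmf_of_set {..<4})
       = map_pmf (\<lambda>r. view t (facet_scheme i j x' r)) (pmf_of_set {..<4})"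
proof -
  have "t \<in> {i, j, k}"
    using UNIV_eq_distinct_3[OF ijk] by blast
  moreover have ?thesis if "t = i"
    by (rule map_pmf_of_set_eq_by_bij[OF bij_betw_flip_bits[of False "x j \<noteq> x' j"]])
      (use that assms view_eq_iff_hidden_shares[OF ijk] in \<open>auto simp: facet_scheme_def lessThan_empty_iff\<close>)
  moreover have ?thesis if "t = j"
    by (rule map_pmf_of_set_eq_by_bij[OF bij_betw_flip_bits[of "x i \<noteq> x' i" False]])
      (use that assms view_eq_iff_hidden_shares[of j i k] in \<open>auto simp: facet_scheme_def lessThan_empty_iff\<close>)
  moreover have ?thesis if "t = k"
  proof -
    have "view k (facet_scheme i j x r) = view k (facet_scheme i j x' r)" for r
      using view_eq_iff_hidden_shares[of k i j] ijk by (auto simp: facet_scheme_def)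
    then show ?thesis
      using that by simp
  qed
  ultimately show ?thesis
    by blast
qed

lemma is_3SS_facet_scheme:
  assumes ijk: "i \<noteq> j" "i \<noteq> k" "j \<noteq> k" and facet: "\<And>x. x \<in> S \<Longrightarrow> x k = e"
  shows "is_3SS S {..<4} (pmf_of_set {..<4}) (facet_scheme i j)"
  unfolding is_3SS_def
proof (intro conjI allI ballI impI)
  fix t
  show "\<exists>phi. \<forall>x\<in>S. \<forall>r\<in>set_pmf (pmf_of_set {..<4}). phi (view t (facet_scheme i j x r)) = x t"
    by (rule exists_decoder) (use facet facet_scheme_decodes[OF ijk] in metis)
  show "map_pmf (\<lambda>r. view t (facet_scheme i j x r)) (pmf_of_set {..<4})
      = map_pmf (\<lambda>r. view t (facet_scheme i j x' r)) (pmf_of_set {..<4})" if "x t = x' t" for x x'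
    using facet_scheme_private[OF ijk, where x = x and x' = x' and t = t] that .
qed (simp_all add: lessThan_empty_iff)

lemma log_2_4: "log 2 4 = (2::real)"
  using log_pow_cancel[of 2 2] by simp

definition in_facet :: "triple set \<Rightarrow> bool" where
  "in_facet S \<longleftrightarrow> (\<exists>k e. \<forall>x\<in>S. x k = e)"

lemma rho_eq_2:
  assumes "has_corner S" "in_facet S"
  shows "rho S = 2"
  unfolding rho_def
proof (rule cInf_eq_minimum)
  obtain k e where facet: "\<And>x. x \<in> S \<Longrightarrow> x k = e"
    using \<open>in_facet S\<close> unfolding in_facet_def by metis
  obtain i j where "k \<noteq> i" "k \<noteq> j" "i \<noteq> j"
    by (rule obtain_other_two_3)
  then have "is_3SS S {..<4} (pmf_of_set {..<4}) (facet_scheme i j)"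
    using facet by (intro is_3SS_facet_scheme[where k = k and e = e]) auto
  moreover have "log 2 (real (card {..<4::nat})) = 2"
    using log_2_4 by simp
  ultimately have "\<exists>R P psi. 2 = log 2 (real (card R)) \<and> is_3SS S R P psi"
    by metis
  then show "2 \<in> {log 2 (real (card R)) |R P psi. is_3SS S R P psi}"
    by (simp only: mem_Collect_eq)
next
  fix y
  assume "y \<in> {log 2 (real (card R)) |R P psi. is_3SS S R P psi}"
  then obtain R P psi where "is_3SS S R P psi" and y: "y = log 2 (real (card R))"
    unfolding mem_Collect_eq by blast
  then have "4 \<le> card R"
    using is_3SS_card_ge_4 \<open>has_corner S\<close> by blast
  then have "log 2 4 \<le> y"
    unfolding y by simp
  then show "2 \<le> y"
    by (simp only: log_2_4)
qed

lemma cube_edge_negate_coord: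
  "cube_edge i (x(l := \<not> x l)) (y(l := \<not> y l)) \<longleftrightarrow> cube_edge i x y"
  unfolding cube_edge_def by auto

lemma cube_edge_permute_coords:
  assumes "bij \<sigma>"
  shows "cube_edge (inv \<sigma> i) (x \<circ> \<sigma>) (y \<circ> \<sigma>) \<longleftrightarrow> cube_edge i x y"
proof -
  have "(\<forall>t. t \<noteq> inv \<sigma> i \<longrightarrow> x (\<sigma> t) = y (\<sigma> t)) \<longleftrightarrow> (\<forall>u. u \<noteq> i \<longrightarrow> x u = y u)"
    using assms by (metis bij_inv_eq_iff)
  then show ?thesis
    using assms unfolding cube_edge_def by (simp add: bij_inv_eq_iff bij_is_surj surj_f_inv_f)
qed

lemma has_corner_negate_coord:
  assumes "has_corner T"
  shows "has_corner (negate_coord l T)"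
proof -
  obtain a b c i j where abc: "a \<in> T" "b \<in> T" "c \<in> T" "i \<noteq> j" "cube_edge i a b" "cube_edge j b c"
    using assms by (rule has_cornerE)
  let ?neg = "\<lambda>x::triple. x(l := \<not> x l)"
  show ?thesis
  proof (rule has_cornerI)
    show "?neg a \<in> negate_coord l T" "?neg b \<in> negate_coord l T" "?neg c \<in> negate_coord l T"
      unfolding negate_coord_def using abc(1-3) by (auto intro!: imageI)
  qed (use abc cube_edge_negate_coord in simp_all)
qed

lemma has_corner_permute_coords:
  assumes "has_corner T" "bij \<sigma>"
  shows "has_corner (permute_coords \<sigma> T)"
proof -
  obtain a b c i j where abc: "a \<in> T" "b \<in> T" "c \<in> T" "i \<noteq> j" "cube_edge i a b" "cube_edge j b c"
    using assms(1) by (rule has_cornerE)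
  show ?thesis
  proof (rule has_cornerI)
    show "a \<circ> \<sigma> \<in> permute_coords \<sigma> T" "b \<circ> \<sigma> \<in> permute_coords \<sigma> T" "c \<circ> \<sigma> \<in> permute_coords \<sigma> T"
      unfolding permute_coords_def using abc(1-3) by (auto intro!: imageI)
    show "inv \<sigma> i \<noteq> inv \<sigma> j"
      using abc(4) assms(2) by (simp add: bij_inv_eq_iff bij_is_surj surj_f_inv_f)
  qed (use abc cube_edge_permute_coords[OF assms(2)] in simp_all)
qed

lemma in_facet_negate_coord:
  assumes "in_facet T"
  shows "in_facet (negate_coord l T)"
proof -
  obtain k e where "\<forall>x\<in>T. x k = e"
    using assms(1) unfolding in_facet_def by metis
  then have "\<forall>y\<in>negate_coord l T. y k = (if k = l then \<not> e else e)"
    unfolding negate_coord_def by auto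
  then show ?thesis
    unfolding in_facet_def by metis
qed

lemma in_facet_permute_coords:
  assumes "in_facet T" "bij \<sigma>"
  shows "in_facet (permute_coords \<sigma> T)"
proof -
  obtain k e where "\<forall>x\<in>T. x k = e"
    using assms(1) unfolding in_facet_def by metis
  then have "\<forall>y\<in>permute_coords \<sigma> T. y (inv \<sigma> k) = e"
    unfolding permute_coords_def using assms(2) by (auto simp: bij_is_surj surj_f_inv_f)
  then show ?thesis
    unfolding in_facet_def by metis
qed

lemma sym_orbit_has_corner_in_facet:
  assumes "T \<in> sym_orbit S0" "has_corner S0" "in_facet S0"
  shows "has_corner T \<and> in_facet T"
  using assms
  by (induction rule: sym_orbit.induct)
    (simp_all add: has_corner_negate_coord in_facet_negate_coord
      has_corner_permute_coords in_facet_permute_coords)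

theorem mainTheorem8:
  shows "\<forall>S0 \<in> {{trip False False False, trip True False False, trip True True False},
               {trip False False False, trip False False True, trip False True False, trip False True True}}.
           \<forall>S \<in> sym_orbit S0. rho S = 2"
proof -
  have "has_corner {trip False False False, trip True False False, trip True True False}"
    by (rule has_cornerI[where a = "trip False False False" and b = "trip True False False"
          and c = "trip True True False" and i = 0 and j = 1])
      (simp_all add: cube_edge_def all_3_iff trip_def)
  moreover have "in_facet {trip False False False, trip True False False, trip True True False}"
    unfolding in_facet_def by (intro exI[of _ 2] exI[of _ False]) (simp add: trip_def)
  moreover have "has_corner {trip False False False, trip False False True, trip False True False, trip False True True}"
    by (rule has_cornerI[where a = "trip False False False" and b = "trip False False True"
          and c = "trip False True True" and i = 2 and j = 1])
      (simp_all add: cube_edge_def all_3_iff trip_def)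
  moreover have "in_facet {trip False False False, trip False False True, trip False True False, trip False True True}"
    unfolding in_facet_def by (intro exI[of _ 0] exI[of _ False]) (simp add: trip_def)
  ultimately show ?thesis
    using sym_orbit_has_corner_in_facet rho_eq_2 by (metis insertE singletonD)
qed

end
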